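(* Let $V$ be real-valued and absolutely continuous on $[0,\pi]$ and let $a\in(0,\pi)$. Then the series $$\sum_{t\in\operatorname{spec}(H_\pi(\pi/2))}\frac{1}{k_\pi(t,t)}\left|\int_0^\pi\xi(x,z)\,\mathcal R_{a\pi}(x)\,\xi(x,t)\,dx\right|$$ converges uniformly on compact subsets of $\mathbb C$.
   Context: $\xi(x,z)$ is the solution of $-\xi''+V\xi=z\xi$, $\xi(0,z)=1$, $\xi'(0,z)=0$. $H_\pi(\pi/2)$ is the selfadjoint operator $-\frac{d^2}{dx^2}+V$ in $L_2(0,\pi)$ with boundary conditions $\varphi'(0)=0=\varphi'(\pi)$; its spectrum is the set of $\lambda$ with $\xi'(\pi,\lambda)=0$. $k_\pi(t,t)=\int_0^\pi\xi(x,t)^2\,dx$ for real $t$. $\mathcal R_{a\pi}(x)=1$ for $x\in[0,a]$ and $\frac{\pi-x}{\pi-a}$ for $x\in(a,\pi]$. *)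

theory Defs
  imports "HOL-Analysis.Analysis"
begin

definition abs_continuous_on :: "real \<Rightarrow> real \<Rightarrow> (real \<Rightarrow> real) \<Rightarrow> bool" where
  "abs_continuous_on l u f \<longleftrightarrow>
     (\<forall>\<epsilon>>0. \<exists>\<delta>>0. \<forall>(n::nat) (a::nat \<Rightarrow> real) (b::nat \<Rightarrow> real).
        (\<forall>i<n. l \<le> a i \<and> a i \<le> b i \<and> b i \<le> u) \<and>
        (\<forall>i j. i < j \<and> j < n \<longrightarrow> b i \<le> a j) \<and>
        (\<Sum>i<n. b i - a i) < \<delta>
        \<longrightarrow> (\<Sum>i<n. \<bar>f (b i) - f (a i)\<bar>) < \<epsilon>)"

definition Rcut :: "real \<Rightarrow> real \<Rightarrow> real" where
  "Rcut a x = (if x \<le> a then 1 else (pi - x) / (pi - a))"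

text \<open>k_pi(t,t) = integral over [0,pi] of xi(x,t)^2, for real t (xi real-valued there).\<close>
definition kpi :: "(real \<Rightarrow> complex \<Rightarrow> complex) \<Rightarrow> real \<Rightarrow> real" where
  "kpi xi t = Re (integral {0..pi} (\<lambda>x. (xi x (complex_of_real t))\<^sup>2))"

text \<open>Spectrum of H_pi(pi/2): real lambda with xi'(pi,lambda) = 0.\<close>
definition spec_H :: "(real \<Rightarrow> complex \<Rightarrow> complex) \<Rightarrow> real set" where
  "spec_H xi' = {t::real. xi' pi (complex_of_real t) = 0}"

end

theory Submission
  imports Defs
begin

text \<open>Since \<open>V\<close> is bounded on \<open>[0,\<pi>]\<close>, a Gronwall estimate for the energy
  \<open>|\<xi>|\<^sup>2 + |\<xi>'|\<^sup>2\<close> bounds \<open>\<xi>(\<cdot>,z)\<close> uniformly for \<open>z\<close> in a compact set, and shows that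
  \<open>\<xi>(\<cdot>,t)\<close> is real for real \<open>t\<close>. With \<open>c = max |V| + 1\<close>, the eigenfunctions \<open>\<phi>\<^sub>t = \<xi>(\<cdot>,t)\<close>,
  \<open>t\<close> in the spectrum, satisfy \<open>Q(f, \<phi>\<^sub>t) = (t + c) \<langle>f, \<phi>\<^sub>t\<rangle>\<close> for the form
  \<open>Q(f,g) = \<integral> f'g' + (V + c) f g\<close>, so they are orthogonal for both \<open>\<langle>\<cdot>,\<cdot>\<rangle>\<close> and \<open>Q\<close>.
  The \<open>t\<close>-th term is \<open>|p\<^sub>t(z)| / k\<^sub>t\<close> with \<open>p\<^sub>t(z) = \<langle>\<xi>(\<cdot>,z) R, \<phi>\<^sub>t\<rangle>\<close>, whose square is the product
  of \<open>(t + c) |p\<^sub>t(z)|\<^sup>2 / k\<^sub>t\<close> and \<open>1 / (k\<^sub>t (t + c))\<close>. Bessel's inequality for \<open>Q\<close> bounds the sum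
  of the first factors by \<open>Q(\<xi>(\<cdot>,z) R)\<close>, uniformly on compact sets, and the sum of the second ones
  is at most \<open>2\<close>, because \<open>u = \<Sum> \<phi>\<^sub>t / (k\<^sub>t (t + c))\<close> has \<open>Q(u,u) = u(0)\<close> while \<open>u(0)\<^sup>2 \<le> 2 Q(u,u)\<close>.
  Cauchy-Schwarz (in AM-GM form) then makes the tails of the series uniformly small.\<close>

lemma abs_continuous_on_imp_continuous_on:
  assumes "abs_continuous_on l u f"
  shows "continuous_on {l..u} f"
  unfolding continuous_on_iff
proof (intro ballI allI impI)
  fix x e :: real assume x: "x \<in> {l..u}" and e: "0 < e"
  from assms[unfolded abs_continuous_on_def, rule_format, OF e]
  obtain d where d: "0 < d" and small: "\<forall>(n::nat) (p::nat \<Rightarrow> real) (q::nat \<Rightarrow> real).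
      (\<forall>i<n. l \<le> p i \<and> p i \<le> q i \<and> q i \<le> u) \<and> (\<forall>i j. i < j \<and> j < n \<longrightarrow> q i \<le> p j)
      \<and> (\<Sum>i<n. q i - p i) < d \<longrightarrow> (\<Sum>i<n. \<bar>f (q i) - f (p i)\<bar>) < e"
    by blast
  show "\<exists>d>0. \<forall>x'\<in>{l..u}. dist x' x < d \<longrightarrow> dist (f x') (f x) < e"
  proof (intro exI conjI ballI impI)
    fix x' assume x': "x' \<in> {l..u}" and "dist x' x < d"
    then have "(\<Sum>i<Suc 0. \<bar>f (max x x') - f (min x x')\<bar>) < e"
      using x by (intro small[rule_format]) (auto simp: dist_real_def)
    then show "dist (f x') (f x) < e"
      by (cases "x \<le> x'") (auto simp: dist_real_def max_def min_def abs_minus_commute)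
  qed (rule d)
qed

lemma gronwall_exp_bound:
  fixes E Ed :: "real \<Rightarrow> real"
  assumes deriv: "\<And>y. y \<in> {l..u} \<Longrightarrow> (E has_real_derivative Ed y) (at y within {l..u})"
    and deriv_le: "\<And>y. y \<in> {l..u} \<Longrightarrow> Ed y \<le> L * E y"
    and x: "x \<in> {l..u}"
  shows "E x \<le> E l * exp (L * (x - l))"
proof -
  define h where "h y = E y * exp (- L * (y - l))" for y
  define hd where "hd y = (Ed y - L * E y) * exp (- L * (y - l))" for y
  have sub: "{l..x} \<subseteq> {l..u}" using x by auto
  have "(hd has_integral (h x - h l)) {l..x}"
  proof (rule fundamental_theorem_of_calculus)
    fix y assume "y \<in> {l..x}"
    then have "(h has_real_derivative hd y) (at y within {l..u})"
      unfolding h_def hd_def using deriv[of y] sub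
      by (auto intro!: derivative_eq_intros simp: algebra_simps)
    then show "(h has_vector_derivative hd y) (at y within {l..x})"
      unfolding has_real_derivative_iff_has_vector_derivative[symmetric]
      by (rule has_field_derivative_subset[OF _ sub])
  qed (use x in auto)
  moreover have "hd y \<le> 0" if "y \<in> {l..x}" for y
    using deriv_le[of y] that sub by (auto simp: hd_def mult_nonpos_nonneg)
  ultimately have "h x - h l \<le> 0"
    using has_integral_le[OF _ has_integral_0] by blast
  then have "E x * exp (- L * (x - l)) * exp (L * (x - l)) \<le> E l * exp (L * (x - l))"
    by (simp add: h_def mult_right_mono)
  then show ?thesis by (simp add: mult.assoc exp_add[symmetric])
qed

lemma energy_exp_bound:
  fixes w p W :: "real \<Rightarrow> complex"
  assumes w_deriv: "\<And>y. y \<in> {l..u} \<Longrightarrow> (w has_vector_derivative p y) (at y within {l..u})"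
    and p_deriv: "\<And>y. y \<in> {l..u} \<Longrightarrow> (p has_vector_derivative W y * w y) (at y within {l..u})"
    and W_le: "\<And>y. y \<in> {l..u} \<Longrightarrow> 1 + cmod (W y) \<le> L"
    and x: "x \<in> {l..u}"
  shows "(cmod (w x))\<^sup>2 + (cmod (p x))\<^sup>2 \<le> ((cmod (w l))\<^sup>2 + (cmod (p l))\<^sup>2) * exp (L * (x - l))"
proof -
  define E where "E y = (Re (w y))\<^sup>2 + (Im (w y))\<^sup>2 + (Re (p y))\<^sup>2 + (Im (p y))\<^sup>2" for y
  define Ed where "Ed y = 2 * (Re (w y) * Re (p y) + Im (w y) * Im (p y))
     + 2 * Re (cnj (p y) * (W y * w y))" for y
  have E_eq: "E y = (cmod (w y))\<^sup>2 + (cmod (p y))\<^sup>2" for y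
    unfolding E_def cmod_power2 by simp
  have "E x \<le> E l * exp (L * (x - l))"
  proof (rule gronwall_exp_bound[OF _ _ x])
    fix y assume y: "y \<in> {l..u}"
    have r: "((\<lambda>x. Re (w x)) has_real_derivative Re (p y)) (at y within {l..u})"
      "((\<lambda>x. Im (w x)) has_real_derivative Im (p y)) (at y within {l..u})"
      "((\<lambda>x. Re (p x)) has_real_derivative Re (W y * w y)) (at y within {l..u})"
      "((\<lambda>x. Im (p x)) has_real_derivative Im (W y * w y)) (at y within {l..u})"
      using w_deriv[OF y] p_deriv[OF y] unfolding has_vector_derivative_complex_iff by auto
    show "(E has_real_derivative Ed y) (at y within {l..u})"
      unfolding E_def[abs_def] Ed_def power2_eq_square
      by (rule DERIV_cong, (rule DERIV_add DERIV_mult' r)+) (simp add: algebra_simps)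
    have "2 * (Re (w y) * Re (p y) + Im (w y) * Im (p y)) \<le> E y"
      unfolding E_def
      using sum_squares_ge_zero[of "Re (w y) - Re (p y)" "Im (w y) - Im (p y)"]
      by (simp add: power2_eq_square algebra_simps)
    moreover have "2 * Re (cnj (p y) * (W y * w y)) \<le> cmod (W y) * E y"
    proof -
      have "2 * Re (cnj (p y) * (W y * w y)) \<le> cmod (W y) * (2 * cmod (p y) * cmod (w y))"
        using complex_Re_le_cmod[of "cnj (p y) * (W y * w y)"] by (simp add: norm_mult algebra_simps)
      also have "\<dots> \<le> cmod (W y) * E y"
        unfolding E_eq using sum_squares_bound[of "cmod (p y)" "cmod (w y)"] by (intro mult_left_mono) (auto simp: add.commute)
      finally show ?thesis .
    qed
    ultimately have "Ed y \<le> (1 + cmod (W y)) * E y" unfolding Ed_def by (simp add: algebra_simps)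
    also have "\<dots> \<le> L * E y" using W_le[OF y] by (intro mult_right_mono) (auto simp: E_def)
    finally show "Ed y \<le> L * E y" .
  qed
  then show ?thesis unfolding E_eq .
qed

lemma finite_tail_sums_small:
  fixes b :: "'a \<Rightarrow> real"
  assumes bdd: "\<And>H. finite H \<Longrightarrow> H \<subseteq> S \<Longrightarrow> sum b H \<le> B" and "0 < \<epsilon>"
  obtains F0 where "finite F0" "F0 \<subseteq> S" "\<And>H. finite H \<Longrightarrow> H \<subseteq> S - F0 \<Longrightarrow> sum b H < \<epsilon>"
proof -
  define partial where "partial = sum b ` {H. finite H \<and> H \<subseteq> S}"
  have "partial \<noteq> {}" "bdd_above partial" unfolding partial_def using bdd by (auto intro!: bdd_aboveI2)
  moreover have "Sup partial - \<epsilon> < Sup partial" using \<open>0 < \<epsilon>\<close> by simp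
  ultimately obtain x where "x \<in> partial" "Sup partial - \<epsilon> < x"
    using less_cSup_iff by blast
  then obtain F0 where F0: "finite F0" "F0 \<subseteq> S" "Sup partial - \<epsilon> < sum b F0"
    unfolding partial_def by auto
  show ?thesis
  proof (rule that[OF F0(1,2)])
    fix H assume H: "finite H" "H \<subseteq> S - F0"
    have "sum b F0 + sum b H = sum b (F0 \<union> H)" using F0 H by (intro sum.union_disjoint[symmetric]) auto
    also have "\<dots> \<le> Sup partial"
      using F0 H \<open>bdd_above partial\<close> unfolding partial_def by (intro cSup_upper) auto
    finally show "sum b H < \<epsilon>" using F0 by linarith
  qed
qed

lemma two_mul_le_weighted_sum_if_sq_le_mult:
  fixes f a b d :: real
  assumes "0 \<le> f" "0 \<le> a" "0 \<le> b" "f\<^sup>2 \<le> a * b" "0 < d"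
  shows "2 * f \<le> d * a + b / d"
proof (rule power2_le_imp_le)
  have "(2 * f)\<^sup>2 \<le> 4 * ((d * a) * (b / d))"
    using assms(4,5) by (simp add: power_mult_distrib)
  also have "\<dots> \<le> (d * a + b / d)\<^sup>2"
    using zero_le_power2[of "d * a - b / d"] by (simp only: power2_eq_square) argo
  finally show "(2 * f)\<^sup>2 \<le> (d * a + b / d)\<^sup>2" .
qed (use assms in simp)

lemma dist_sum_infsum_le:
  fixes f :: "'a \<Rightarrow> real"
  assumes nonneg: "\<And>t. t \<in> S \<Longrightarrow> 0 \<le> f t" and summable: "f summable_on S"
    and Y: "finite Y" "Y \<subseteq> S"
    and tail: "\<And>H. finite H \<Longrightarrow> H \<subseteq> S - Y \<Longrightarrow> sum f H \<le> \<epsilon>"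
  shows "dist (sum f Y) (infsum f S) \<le> \<epsilon>"
proof -
  have "infsum f S = infsum f (Y \<union> (S - Y))" using Y by (simp add: Un_absorb1)
  also have "\<dots> = sum f Y + infsum f (S - Y)"
    using Y summable by (subst infsum_Un_disjoint) (auto intro: summable_on_subset_banach)
  finally have "infsum f S = sum f Y + infsum f (S - Y)" .
  moreover have "0 \<le> infsum f (S - Y)" using nonneg by (intro infsum_nonneg) auto
  moreover have "infsum f (S - Y) \<le> \<epsilon>"
    using summable tail by (intro infsum_le_finite_sums) (auto intro: summable_on_subset_banach)
  ultimately show ?thesis by (simp add: dist_real_def)
qed

text \<open>Choosing \<open>d\<close> small in \<open>2 f \<le> d aa + b / d\<close> makes the first part uniformly small, and the
  tails of \<open>b\<close> are small.\<close>
lemma uniform_limit_sum_if_sq_le_mult: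
  fixes f aa :: "'a \<Rightarrow> 'b \<Rightarrow> real" and b :: "'b \<Rightarrow> real"
  assumes nonneg: "\<And>z t. z \<in> K \<Longrightarrow> t \<in> S \<Longrightarrow> 0 \<le> f z t \<and> 0 \<le> aa z t \<and> 0 \<le> b t"
    and sq_le: "\<And>z t. z \<in> K \<Longrightarrow> t \<in> S \<Longrightarrow> (f z t)\<^sup>2 \<le> aa z t * b t"
    and aa_bdd: "\<And>z H. z \<in> K \<Longrightarrow> finite H \<Longrightarrow> H \<subseteq> S \<Longrightarrow> sum (aa z) H \<le> A"
    and b_bdd: "\<And>H. finite H \<Longrightarrow> H \<subseteq> S \<Longrightarrow> sum b H \<le> B"
  shows "uniform_limit K (\<lambda>F z. \<Sum>t\<in>F. f z t) (\<lambda>z. infsum (f z) S) (finite_subsets_at_top S)"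
proof -
  have sum_le: "2 * sum (f z) H \<le> d * \<bar>A\<bar> + sum b H / d"
    if z: "z \<in> K" and H: "finite H" "H \<subseteq> S" and d: "0 < d" for z H d
  proof -
    have "2 * sum (f z) H \<le> (\<Sum>t\<in>H. d * aa z t + b t / d)"
      unfolding sum_distrib_left using H nonneg[OF z] sq_le[OF z] d
      by (intro sum_mono two_mul_le_weighted_sum_if_sq_le_mult) auto
    also have "\<dots> = d * sum (aa z) H + sum b H / d"
      by (simp add: sum.distrib sum_distrib_left sum_divide_distrib)
    also have "\<dots> \<le> d * \<bar>A\<bar> + sum b H / d"
      using aa_bdd[OF z H] d by (intro add_right_mono mult_left_mono) auto
    finally show ?thesis .
  qed
  have summable: "f z summable_on S" if z: "z \<in> K" for z
  proof (rule nonneg_bdd_above_summable_on)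
    show "bdd_above (sum (f z) ` {F. F \<subseteq> S \<and> finite F})"
      using sum_le[OF z _ _ zero_less_one] b_bdd by (intro bdd_aboveI2[of _ _ "(\<bar>A\<bar> + B) / 2"]) force
  qed (use nonneg z in auto)
  show ?thesis
    unfolding uniform_limit_iff
  proof (intro allI impI)
    fix e :: real assume e: "0 < e"
    define d where "d = e / (2 * (\<bar>A\<bar> + 1))"
    have d: "0 < d" "d * \<bar>A\<bar> < e / 2"
      using e by (auto simp: d_def field_simps)
    obtain F0 where F0: "finite F0" "F0 \<subseteq> S"
      and tail: "\<And>H. finite H \<Longrightarrow> H \<subseteq> S - F0 \<Longrightarrow> sum b H < e * d / 2"
      using finite_tail_sums_small[OF b_bdd] e d by (metis half_gt_zero mult_pos_pos)
    have small: "sum (f z) H \<le> e / 2" if "z \<in> K" "finite H" "H \<subseteq> S - F0" for z H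
    proof -
      have "sum b H / d < e / 2" using tail[OF that(2,3)] d by (simp add: field_simps)
      moreover have "H \<subseteq> S" using that(3) by blast
      ultimately show ?thesis using sum_le[OF that(1,2) _ d(1)] d(2) by linarith
    qed
    show "\<forall>\<^sub>F F in finite_subsets_at_top S. \<forall>z\<in>K. dist (\<Sum>t\<in>F. f z t) (infsum (f z) S) < e"
      unfolding eventually_finite_subsets_at_top
    proof (intro exI conjI allI impI ballI)
      fix Y z assume Y: "finite Y \<and> F0 \<subseteq> Y \<and> Y \<subseteq> S" and z: "z \<in> K"
      have "dist (sum (f z) Y) (infsum (f z) S) \<le> e / 2"
        using Y nonneg[OF z] by (intro dist_sum_infsum_le summable[OF z] small[OF z]) auto
      then show "dist (\<Sum>t\<in>Y. f z t) (infsum (f z) S) < e" using e by simp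
    qed (use F0 in auto)
  qed
qed

lemma sq_at_0_le_two_energy:
  fixes u ud q :: "real \<Rightarrow> real"
  assumes deriv: "\<And>y. y \<in> {0..l} \<Longrightarrow> (u has_real_derivative ud y) (at y within {0..l})"
    and q: "\<And>y. y \<in> {0..l} \<Longrightarrow> 1 \<le> q y" and l: "1 \<le> l"
    and energy: "((\<lambda>y. ud y * ud y + q y * u y * u y) has_integral Q) {0..l}"
  shows "(u 0)\<^sup>2 \<le> 2 * Q"
proof -
  have "((\<lambda>y. (u y)\<^sup>2 / l - (l - y) / l * (2 * u y * ud y)) has_integral
      (- ((l - l) / l * (u l)\<^sup>2) - - ((l - 0) / l * (u 0)\<^sup>2))) {0..l}"
  proof (rule fundamental_theorem_of_calculus)
    fix y assume "y \<in> {0..l}"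
    then have "((\<lambda>y. - ((l - y) / l * (u y)\<^sup>2)) has_real_derivative
        (u y)\<^sup>2 / l - (l - y) / l * (2 * u y * ud y)) (at y within {0..l})"
      using deriv[of y] l by (auto intro!: derivative_eq_intros simp: field_simps)
    then show "((\<lambda>y. - ((l - y) / l * (u y)\<^sup>2)) has_vector_derivative
        (u y)\<^sup>2 / l - (l - y) / l * (2 * u y * ud y)) (at y within {0..l})"
      by (simp add: has_real_derivative_iff_has_vector_derivative)
  qed (use l in simp)
  then have "((\<lambda>y. (u y)\<^sup>2 / l - (l - y) / l * (2 * u y * ud y)) has_integral (u 0)\<^sup>2) {0..l}"
    using l by simp
  then show ?thesis
  proof (rule has_integral_le[OF _ has_integral_mult_right[OF energy, of 2]])
    fix y assume y: "y \<in> {0..l}"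
    have "(u y)\<^sup>2 / l \<le> (u y)\<^sup>2" using l by (simp add: divide_le_eq mult_le_cancel_left1)
    moreover have "\<bar>(l - y) / l * (2 * u y * ud y)\<bar> \<le> 2 * \<bar>u y * ud y\<bar>"
    proof -
      have w: "0 \<le> (l - y) / l" "(l - y) / l \<le> 1" using y l by auto
      then have "\<bar>(l - y) / l * (2 * u y * ud y)\<bar> = (l - y) / l * \<bar>2 * u y * ud y\<bar>"
        by (simp only: abs_mult abs_of_nonneg)
      also have "\<dots> \<le> \<bar>2 * u y * ud y\<bar>" using w by (intro mult_left_le_one_le) auto
      finally show ?thesis by (simp add: abs_mult)
    qed
    moreover have "2 * \<bar>u y * ud y\<bar> \<le> (u y)\<^sup>2 + (ud y)\<^sup>2"
      using sum_squares_bound[of "\<bar>u y\<bar>" "\<bar>ud y\<bar>"] by (simp add: abs_mult)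
    moreover have "(u y)\<^sup>2 \<le> q y * u y * u y"
      using q[OF y] by (simp add: power2_eq_square mult_le_cancel_right1 mult.assoc)
    ultimately show "(u y)\<^sup>2 / l - (l - y) / l * (2 * u y * ud y) \<le> 2 * (ud y * ud y + q y * u y * u y)"
      using abs_ge_minus_self[of "(l - y) / l * (2 * u y * ud y)"] zero_le_square[of "ud y"] unfolding power2_eq_square by argo
  qed
qed

lemma integrable_on_piecewise:
  fixes f g :: "real \<Rightarrow> real"
  assumes "continuous_on {l..m} f" "continuous_on {m..u} g" "l \<le> m" "m \<le> u"
  shows "(\<lambda>y. if y \<le> m then f y else g y) integrable_on {l..u}"
proof (rule Henstock_Kurzweil_Integration.integrable_combine[OF \<open>l \<le> m\<close> \<open>m \<le> u\<close>])
  show "(\<lambda>y. if y \<le> m then f y else g y) integrable_on {l..m}"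
    by (rule integrable_eq[OF integrable_continuous_interval[OF assms(1)]]) auto
  show "(\<lambda>y. if y \<le> m then f y else g y) integrable_on {m..u}"
    by (rule integrable_spike_finite[of "{m}", OF _ _ integrable_continuous_interval[OF assms(2)]]) auto
qed

lemma norm_integral_sq_Re_Im:
  fixes h :: "real \<Rightarrow> complex"
  assumes "h integrable_on S"
  shows "(cmod (integral S h))\<^sup>2 = (integral S (\<lambda>x. Re (h x)))\<^sup>2 + (integral S (\<lambda>x. Im (h x)))\<^sup>2"
  using has_integral_Re[OF integrable_integral[OF assms]] has_integral_Im[OF integrable_integral[OF assms]]
  by (simp add: integral_unique cmod_power2)

lemma Rcut_eq_min: "a < pi \<Longrightarrow> Rcut a x = min 1 ((pi - x) / (pi - a))"
  by (auto simp: Rcut_def min_def field_simps)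

lemma continuous_on_Rcut:
  assumes "a < pi"
  shows "continuous_on S (Rcut a)"
proof -
  have "Rcut a = (\<lambda>x. min 1 ((pi - x) / (pi - a)))" using Rcut_eq_min[OF assms] by auto
  then show ?thesis using assms by (auto intro!: continuous_intros)
qed

lemma Rcut_bounds: "a < pi \<Longrightarrow> x \<le> pi \<Longrightarrow> 0 \<le> Rcut a x \<and> Rcut a x \<le> 1"
  by (auto simp: Rcut_def field_simps)

definition Rcut_deriv :: "real \<Rightarrow> real \<Rightarrow> real" where
  "Rcut_deriv a y = (if y \<le> a then 0 else - 1 / (pi - a))"

lemma Rcut_has_real_derivative:
  assumes "a < pi" "y \<noteq> a"
  shows "(Rcut a has_real_derivative Rcut_deriv a y) (at y)"
proof (cases "y < a")
  case True
  have "((\<lambda>_. 1) has_real_derivative 0) (at y)" by simp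
  then have "(Rcut a has_real_derivative 0) (at y)"
    by (rule has_field_derivative_transform_within_open[of _ _ _ "{..<a}"])
       (use True in \<open>auto simp: Rcut_def\<close>)
  then show ?thesis using True by (simp add: Rcut_deriv_def)
next
  case False
  have "((\<lambda>x. pi - x) has_real_derivative - 1) (at y)"
    by (auto intro!: derivative_eq_intros)
  from DERIV_cdivide[OF this, of "pi - a"]
  have "((\<lambda>x. (pi - x) / (pi - a)) has_real_derivative - 1 / (pi - a)) (at y)" by simp
  then have "(Rcut a has_real_derivative - 1 / (pi - a)) (at y)"
    by (rule has_field_derivative_transform_within_open[of _ _ _ "{a<..}"])
       (use False assms in \<open>auto simp: Rcut_def\<close>)
  then show ?thesis using False assms by (simp add: Rcut_deriv_def)
qed

lemma Rcut_mult_sq_le: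
  assumes "a < pi" "x \<le> pi" "X\<^sup>2 \<le> B"
  shows "(Rcut a x * X)\<^sup>2 \<le> B"
proof -
  have "(Rcut a x * X)\<^sup>2 = (Rcut a x)\<^sup>2 * X\<^sup>2" by (simp add: power_mult_distrib)
  also have "\<dots> \<le> 1 * B"
    using Rcut_bounds[OF assms(1,2)] assms(3) by (intro mult_mono) (auto simp: power_le_one)
  finally show ?thesis by simp
qed

lemma Rcut_product_deriv_sq_le:
  assumes "a < pi" "x \<le> pi" "X\<^sup>2 \<le> B" "X'\<^sup>2 \<le> B"
  shows "(Rcut_deriv a x * X + Rcut a x * X')\<^sup>2 \<le> 2 * B / (pi - a)\<^sup>2 + 2 * B"
proof -
  have "(Rcut_deriv a x)\<^sup>2 * X\<^sup>2 \<le> 1 / (pi - a)\<^sup>2 * B"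
    using assms(3) by (intro mult_mono) (auto simp: Rcut_deriv_def power_divide)
  then have "(Rcut_deriv a x * X)\<^sup>2 \<le> B / (pi - a)\<^sup>2" by (simp add: power_mult_distrib)
  moreover have "(Rcut_deriv a x * X + Rcut a x * X')\<^sup>2
      \<le> 2 * (Rcut_deriv a x * X)\<^sup>2 + 2 * (Rcut a x * X')\<^sup>2"
    using sum_squares_bound[of "Rcut_deriv a x * X" "Rcut a x * X'"] by (simp add: power2_sum)
  ultimately show ?thesis using Rcut_mult_sq_le[OF assms(1,2,4)] by simp
qed

lemma integrable_on_Rcut_product_deriv_sq:
  assumes a: "0 < a" "a < pi" and G: "continuous_on {0..pi} G" and G': "continuous_on {0..pi} G'"
  shows "(\<lambda>y. (Rcut_deriv a y * G y + Rcut a y * G' y)\<^sup>2) integrable_on {0..pi}"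
proof -
  have "(\<lambda>y. if y \<le> a then (Rcut a y * G' y)\<^sup>2 else (- 1 / (pi - a) * G y + Rcut a y * G' y)\<^sup>2)
      integrable_on {0..pi}"
    using a by (intro integrable_on_piecewise continuous_intros continuous_on_Rcut
        continuous_on_subset[OF G] continuous_on_subset[OF G']) auto
  then show ?thesis by (rule integrable_eq) (auto simp: Rcut_deriv_def)
qed

locale neumann_solution =
  fixes V :: "real \<Rightarrow> real" and M :: real and xi xi' :: "real \<Rightarrow> complex \<Rightarrow> complex"
  assumes continuous_V: "continuous_on {0..pi} V"
    and abs_V_le: "\<And>x. x \<in> {0..pi} \<Longrightarrow> \<bar>V x\<bar> \<le> M"
    and xi_deriv: "\<And>z x. x \<in> {0..pi} \<Longrightarrow>
            ((\<lambda>y. xi y z) has_vector_derivative xi' x z) (at x within {0..pi})"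
    and xi'_deriv: "\<And>z x. x \<in> {0..pi} \<Longrightarrow>
            ((\<lambda>y. xi' y z) has_vector_derivative ((complex_of_real (V x) - z) * xi x z))
              (at x within {0..pi})"
    and xi_init: "\<And>z. xi 0 z = 1" "\<And>z. xi' 0 z = 0"
begin

text \<open>With this shift the form \<open>\<integral> f' g' + (V + shift) f g\<close> dominates the \<open>L\<^sub>2\<close> inner product.\<close>
definition "shift = M + 1"

definition "phi t y = Re (xi y (complex_of_real t))"
definition "phi' t y = Re (xi' y (complex_of_real t))"
definition "k t = integral {0..pi} (\<lambda>y. (phi t y)\<^sup>2)"
definition "fourier_coef g t = integral {0..pi} (\<lambda>y. g y * phi t y)"

lemma one_le_V_shift: "y \<in> {0..pi} \<Longrightarrow> 1 \<le> V y + shift"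
  using abs_V_le[of y] by (auto simp: shift_def)

lemma xi_energy_bound:
  assumes x: "x \<in> {0..pi}"
  shows "(cmod (xi x z))\<^sup>2 + (cmod (xi' x z))\<^sup>2 \<le> exp ((1 + M + cmod z) * pi)"
proof -
  have "(cmod (xi x z))\<^sup>2 + (cmod (xi' x z))\<^sup>2
      \<le> ((cmod (xi 0 z))\<^sup>2 + (cmod (xi' 0 z))\<^sup>2) * exp ((1 + M + cmod z) * (x - 0))"
  proof (rule energy_exp_bound[OF xi_deriv xi'_deriv _ x])
    fix y :: real assume "y \<in> {0..pi}"
    then show "1 + cmod (complex_of_real (V y) - z) \<le> 1 + M + cmod z"
      using norm_triangle_ineq4[of "complex_of_real (V y)" z] abs_V_le[of y] by simp
  qed
  also have "\<dots> \<le> exp ((1 + M + cmod z) * pi)"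
    using x abs_V_le[of 0] by (auto simp: xi_init intro!: mult_left_mono)
  finally show ?thesis .
qed

text \<open>For real \<open>t\<close>, \<open>\<xi>(\<cdot>,t) - cnj \<xi>(\<cdot>,t)\<close> solves the same equation with zero initial data.\<close>
lemma xi_real:
  assumes x: "x \<in> {0..pi}"
  shows "xi x (complex_of_real t) = complex_of_real (phi t x)"
proof -
  let ?z = "complex_of_real t"
  have "(cmod (xi x ?z - cnj (xi x ?z)))\<^sup>2 + (cmod (xi' x ?z - cnj (xi' x ?z)))\<^sup>2
     \<le> ((cmod (xi 0 ?z - cnj (xi 0 ?z)))\<^sup>2 + (cmod (xi' 0 ?z - cnj (xi' 0 ?z)))\<^sup>2)
        * exp ((1 + M + \<bar>t\<bar>) * (x - 0))"
  proof (rule energy_exp_bound[where W = "\<lambda>y. complex_of_real (V y) - ?z", OF _ _ _ x])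
    fix y :: real assume y: "y \<in> {0..pi}"
    show "((\<lambda>y. xi y ?z - cnj (xi y ?z)) has_vector_derivative xi' y ?z - cnj (xi' y ?z))
        (at y within {0..pi})"
      by (intro derivative_intros xi_deriv y)
    have "((\<lambda>y. xi' y ?z - cnj (xi' y ?z)) has_vector_derivative
        (complex_of_real (V y) - ?z) * xi y ?z - cnj ((complex_of_real (V y) - ?z) * xi y ?z))
        (at y within {0..pi})"
      by (intro derivative_intros xi'_deriv y)
    then show "((\<lambda>y. xi' y ?z - cnj (xi' y ?z)) has_vector_derivative
        (complex_of_real (V y) - ?z) * (xi y ?z - cnj (xi y ?z))) (at y within {0..pi})"
      by (simp add: algebra_simps)
    show "1 + cmod (complex_of_real (V y) - ?z) \<le> 1 + M + \<bar>t\<bar>"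
      using norm_triangle_ineq4[of "complex_of_real (V y)" ?z] abs_V_le[OF y] by simp
  qed
  also have "\<dots> = 0" by (simp add: xi_init)
  finally have "cmod (xi x ?z - cnj (xi x ?z)) = 0"
    by (smt (verit) zero_le_power2 power2_eq_square mult_eq_0_iff norm_ge_zero)
  then have "Im (xi x ?z) = 0" by (simp add: complex_eq_iff)
  then show ?thesis unfolding phi_def by (simp add: complex_eq_iff)
qed

lemma phi_deriv: "y \<in> {0..pi} \<Longrightarrow> (phi t has_real_derivative phi' t y) (at y within {0..pi})"
  using xi_deriv[of y "complex_of_real t"]
  unfolding phi_def[abs_def] phi'_def has_vector_derivative_complex_iff by auto

lemma phi'_deriv:
  "y \<in> {0..pi} \<Longrightarrow> (phi' t has_real_derivative (V y - t) * phi t y) (at y within {0..pi})"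
  using xi'_deriv[of y "complex_of_real t"]
  unfolding phi_def phi'_def[abs_def] has_vector_derivative_complex_iff by auto

lemma phi_deriv_at: "y \<in> {0<..<pi} \<Longrightarrow> (phi t has_real_derivative phi' t y) (at y)"
  using phi_deriv[of y t] by (simp add: at_within_Icc_at)

lemma phi_init: "phi t 0 = 1" and phi'_init: "phi' t 0 = 0"
  by (auto simp: phi_def phi'_def xi_init)

lemma continuous_on_phi: "continuous_on {0..pi} (phi t)"
  using phi_deriv by (rule DERIV_continuous_on)

lemma continuous_on_phi': "continuous_on {0..pi} (phi' t)"
  using phi'_deriv by (rule DERIV_continuous_on)

lemma continuous_on_xi: "continuous_on {0..pi} (\<lambda>y. xi y z)"
  unfolding continuous_on_eq_continuous_within
  using xi_deriv has_vector_derivative_continuous by blast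

lemma continuous_on_xi': "continuous_on {0..pi} (\<lambda>y. xi' y z)"
  unfolding continuous_on_eq_continuous_within
  using xi'_deriv has_vector_derivative_continuous by blast

lemma kpi_eq_k: "kpi xi t = k t"
proof -
  have "(\<lambda>y. (xi y (complex_of_real t))\<^sup>2) integrable_on {0..pi}"
    by (intro integrable_continuous_interval continuous_intros continuous_on_xi)
  from has_integral_Re[OF integrable_integral[OF this]]
  have "((\<lambda>y. (phi t y)\<^sup>2) has_integral kpi xi t) {0..pi}"
    unfolding kpi_def by (rule has_integral_eq[rotated]) (auto simp: xi_real)
  then show ?thesis unfolding k_def by (rule integral_unique[symmetric])
qed

lemma spec_H_imp_phi'_pi: "t \<in> spec_H xi' \<Longrightarrow> phi' t pi = 0"
  by (simp add: spec_H_def phi'_def)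

text \<open>Integration by parts against an eigenfunction; the boundary terms vanish by the
  Neumann conditions at \<open>0\<close> and \<open>\<pi>\<close>.\<close>
lemma energy_fourier_coef:
  assumes t: "t \<in> spec_H xi'" and g: "continuous_on {0..pi} g" and T: "finite T"
    and g_deriv: "\<And>y. y \<in> {0<..<pi} - T \<Longrightarrow> (g has_real_derivative gd y) (at y)"
  shows "((\<lambda>y. gd y * phi' t y + (V y + shift) * g y * phi t y) has_integral
           (t + shift) * fourier_coef g t) {0..pi}"
proof -
  have "((\<lambda>y. gd y * phi' t y + g y * ((V y - t) * phi t y)) has_integral
      g pi * phi' t pi - g 0 * phi' t 0) {0..pi}"
  proof (rule fundamental_theorem_of_calculus_interior_strong[OF T])
    fix y assume y: "y \<in> {0<..<pi} - T"
    then have "(phi' t has_real_derivative (V y - t) * phi t y) (at y)"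
      using phi'_deriv[of y t] by (simp add: at_within_Icc_at)
    from DERIV_mult'[OF g_deriv[OF y] this]
    show "((\<lambda>y. g y * phi' t y) has_vector_derivative
        gd y * phi' t y + g y * ((V y - t) * phi t y)) (at y)"
      by (simp add: has_real_derivative_iff_has_vector_derivative algebra_simps)
  qed (auto intro!: continuous_intros g continuous_on_phi')
  then have "((\<lambda>y. gd y * phi' t y + g y * ((V y - t) * phi t y)) has_integral 0) {0..pi}"
    using spec_H_imp_phi'_pi[OF t] by (simp add: phi'_init)
  moreover have "((\<lambda>y. (t + shift) * (g y * phi t y)) has_integral (t + shift) * fourier_coef g t) {0..pi}"
    unfolding fourier_coef_def
    by (intro has_integral_mult_right integrable_integral integrable_continuous_interval
        continuous_intros g continuous_on_phi)
  ultimately have "((\<lambda>y. (gd y * phi' t y + g y * ((V y - t) * phi t y)) + (t + shift) * (g y * phi t y))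
      has_integral 0 + (t + shift) * fourier_coef g t) {0..pi}"
    by (rule has_integral_add)
  then show ?thesis
    unfolding add_0_left by (rule has_integral_eq[rotated]) (simp add: algebra_simps)
qed

lemma energy_phi:
  assumes "t \<in> spec_H xi'"
  shows "((\<lambda>y. phi' s y * phi' t y + (V y + shift) * phi s y * phi t y) has_integral
           (t + shift) * fourier_coef (phi s) t) {0..pi}"
  by (intro energy_fourier_coef[OF assms continuous_on_phi finite.emptyI] phi_deriv_at) simp

lemma phi_orthogonal:
  assumes "s \<in> spec_H xi'" "t \<in> spec_H xi'" "s \<noteq> t"
  shows "fourier_coef (phi s) t = 0"
proof -
  have "((\<lambda>y. phi' s y * phi' t y + (V y + shift) * phi s y * phi t y) has_integral
      (s + shift) * fourier_coef (phi t) s) {0..pi}"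
    using energy_phi[OF assms(1), of t] by (simp add: mult_ac)
  then have "(t + shift) * fourier_coef (phi s) t = (s + shift) * fourier_coef (phi t) s"
    using energy_phi[OF assms(2), of s] by (rule has_integral_unique[rotated])
  moreover have "fourier_coef (phi t) s = fourier_coef (phi s) t"
    by (simp add: fourier_coef_def mult.commute)
  ultimately show ?thesis using assms(3) by (simp add: algebra_simps)
qed

lemma fourier_coef_phi_self: "fourier_coef (phi t) t = k t"
  by (simp add: fourier_coef_def k_def power2_eq_square)

lemma k_pos: "0 < k t"
proof -
  have c: "continuous_on {0..pi} (\<lambda>y. (phi t y)\<^sup>2)" by (intro continuous_intros continuous_on_phi)
  have "k t \<ge> 0" unfolding k_def by (intro integral_nonneg integrable_continuous_interval c) auto
  moreover have "k t \<noteq> 0"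
  proof
    assume "k t = 0"
    then have "\<forall>x\<in>{0..pi}. (phi t x)\<^sup>2 = 0" unfolding k_def using integral_eq_0_iff[OF c] by simp
    then show False using phi_init[of t] by auto
  qed
  ultimately show ?thesis by simp
qed

lemma one_le_eigenvalue_shift:
  assumes "t \<in> spec_H xi'"
  shows "1 \<le> t + shift"
proof -
  have "((\<lambda>y. (phi t y)\<^sup>2) has_integral k t) {0..pi}" unfolding k_def
    by (intro integrable_integral integrable_continuous_interval continuous_intros continuous_on_phi)
  then have "k t \<le> (t + shift) * k t"
  proof (rule has_integral_le[OF _ energy_phi[OF assms, of t, unfolded fourier_coef_phi_self]])
    fix y assume y: "y \<in> {0..pi}"
    have "(phi t y)\<^sup>2 \<le> (V y + shift) * (phi t y)\<^sup>2"
      using mult_right_mono[OF one_le_V_shift[OF y], of "(phi t y)\<^sup>2"] by simp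
    then show "(phi t y)\<^sup>2 \<le> phi' t y * phi' t y + (V y + shift) * phi t y * phi t y"
      using zero_le_square[of "phi' t y"] unfolding power2_eq_square mult.assoc by linarith
  qed
  then show ?thesis using k_pos[of t] by simp
qed


definition "eigen_comb w F y = (\<Sum>t\<in>F. w t * phi t y)"
definition "eigen_comb' w F y = (\<Sum>t\<in>F. w t * phi' t y)"

lemma eigen_comb_deriv:
  "y \<in> {0..pi} \<Longrightarrow> (eigen_comb w F has_real_derivative eigen_comb' w F y) (at y within {0..pi})"
  unfolding eigen_comb_def[abs_def] eigen_comb'_def by (intro DERIV_sum DERIV_cmult phi_deriv)

lemma eigen_comb_deriv_at:
  "y \<in> {0<..<pi} \<Longrightarrow> (eigen_comb w F has_real_derivative eigen_comb' w F y) (at y)"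
  using eigen_comb_deriv[of y w F] by (simp add: at_within_Icc_at)

lemma continuous_on_eigen_comb: "continuous_on {0..pi} (eigen_comb w F)"
  using eigen_comb_deriv by (rule DERIV_continuous_on)

lemma energy_eigen_comb_fourier_coef:
  assumes F: "finite F" "F \<subseteq> spec_H xi'"
    and g: "continuous_on {0..pi} g" and T: "finite T"
    and g_deriv: "\<And>y. y \<in> {0<..<pi} - T \<Longrightarrow> (g has_real_derivative gd y) (at y)"
  shows "((\<lambda>y. gd y * eigen_comb' w F y + (V y + shift) * g y * eigen_comb w F y) has_integral
           (\<Sum>t\<in>F. w t * ((t + shift) * fourier_coef g t))) {0..pi}"
proof -
  have "((\<lambda>y. \<Sum>t\<in>F. w t * (gd y * phi' t y + (V y + shift) * g y * phi t y)) has_integral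
           (\<Sum>t\<in>F. w t * ((t + shift) * fourier_coef g t))) {0..pi}"
    using F by (intro has_integral_sum has_integral_mult_right energy_fourier_coef[OF _ g T g_deriv]) auto
  then show ?thesis
    by (rule has_integral_eq[rotated])
       (simp add: eigen_comb_def eigen_comb'_def sum_distrib_left sum.distrib algebra_simps)
qed

lemma fourier_coef_eigen_comb:
  assumes F: "finite F" "F \<subseteq> spec_H xi'" and s: "s \<in> F"
  shows "fourier_coef (eigen_comb w F) s = w s * k s"
proof -
  have "((\<lambda>y. \<Sum>t\<in>F. w t * (phi t y * phi s y)) has_integral
           (\<Sum>t\<in>F. w t * fourier_coef (phi t) s)) {0..pi}"
    unfolding fourier_coef_def
    by (intro has_integral_sum F has_integral_mult_right integrable_integral
         integrable_continuous_interval continuous_intros continuous_on_phi)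
  then have "fourier_coef (eigen_comb w F) s = (\<Sum>t\<in>F. w t * fourier_coef (phi t) s)"
    unfolding fourier_coef_def
    by (intro integral_unique) (simp add: eigen_comb_def sum_distrib_right mult.assoc)
  also have "\<dots> = (\<Sum>t\<in>F. if t = s then w s * k s else 0)"
    using F s by (intro sum.cong) (auto simp: phi_orthogonal fourier_coef_phi_self subsetD)
  also have "\<dots> = w s * k s" using F s by simp
  finally show ?thesis .
qed

lemma energy_eigen_comb:
  assumes F: "finite F" "F \<subseteq> spec_H xi'"
  shows "((\<lambda>y. eigen_comb' w F y * eigen_comb' w F y + (V y + shift) * eigen_comb w F y * eigen_comb w F y)
           has_integral (\<Sum>t\<in>F. (t + shift) * (w t)\<^sup>2 * k t)) {0..pi}"
proof -
  have "((\<lambda>y. eigen_comb' w F y * eigen_comb' w F y + (V y + shift) * eigen_comb w F y * eigen_comb w F y)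
      has_integral (\<Sum>t\<in>F. w t * ((t + shift) * fourier_coef (eigen_comb w F) t))) {0..pi}"
    by (intro energy_eigen_comb_fourier_coef[OF F continuous_on_eigen_comb finite.emptyI]
        eigen_comb_deriv_at) simp
  also have "(\<Sum>t\<in>F. w t * ((t + shift) * fourier_coef (eigen_comb w F) t))
      = (\<Sum>t\<in>F. (t + shift) * (w t)\<^sup>2 * k t)"
    using F by (intro sum.cong) (auto simp: fourier_coef_eigen_comb power2_eq_square)
  finally show ?thesis .
qed

text \<open>The combination \<open>u = \<Sum> \<phi>\<^sub>t / (k\<^sub>t (t + shift))\<close> has energy \<open>u(0)\<close>, while
  \<open>u(0)\<^sup>2\<close> is at most twice its energy.\<close>
lemma sum_inverse_k_shift_le_2:
  assumes F: "finite F" "F \<subseteq> spec_H xi'"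
  shows "(\<Sum>t\<in>F. 1 / (k t * (t + shift))) \<le> 2"
proof -
  define w where "w t = 1 / (k t * (t + shift))" for t
  have pos: "0 < k t * (t + shift)" if "t \<in> F" for t
    using k_pos[of t] one_le_eigenvalue_shift[of t] F that by (auto intro: mult_pos_pos)
  have "(\<Sum>t\<in>F. (t + shift) * (w t)\<^sup>2 * k t) = sum w F"
    using pos by (intro sum.cong) (auto simp: w_def power2_eq_square)
  then have "((\<lambda>y. eigen_comb' w F y * eigen_comb' w F y + (V y + shift) * eigen_comb w F y * eigen_comb w F y)
      has_integral sum w F) {0..pi}"
    using energy_eigen_comb[OF F, of w] by simp
  from sq_at_0_le_two_energy[OF eigen_comb_deriv one_le_V_shift _ this]
  have "(sum w F)\<^sup>2 \<le> 2 * sum w F" using pi_gt3 by (simp add: eigen_comb_def phi_init)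
  moreover have "0 \<le> sum w F" using pos by (auto intro!: sum_nonneg simp: w_def less_imp_le)
  ultimately have "sum w F \<le> 2" by (auto simp: power2_eq_square mult_le_cancel_right)
  then show ?thesis unfolding w_def .
qed

text \<open>\<open>Q(f - u, f - u) \<ge> 0\<close> for the projection \<open>u = \<Sum> (\<langle>f, \<phi>\<^sub>t\<rangle> / k\<^sub>t) \<phi>\<^sub>t\<close>, since the \<open>\<phi>\<^sub>t\<close> are
  \<open>Q\<close>-orthogonal with \<open>Q(\<phi>\<^sub>t, \<phi>\<^sub>t) = (t + shift) k\<^sub>t\<close>.\<close>
lemma bessel_energy:
  assumes F: "finite F" "F \<subseteq> spec_H xi'"
    and f: "continuous_on {0..pi} f" and T: "finite T"
    and f_deriv: "\<And>y. y \<in> {0<..<pi} - T \<Longrightarrow> (f has_real_derivative fd y) (at y)"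
    and energy: "((\<lambda>y. fd y * fd y + (V y + shift) * f y * f y) has_integral Q) {0..pi}"
  shows "(\<Sum>t\<in>F. (t + shift) * (fourier_coef f t)\<^sup>2 / k t) \<le> Q"
proof -
  define w where "w t = fourier_coef f t / k t" for t
  define A where "A = (\<Sum>t\<in>F. (t + shift) * (fourier_coef f t)\<^sup>2 / k t)"
  let ?u = "eigen_comb w F" and ?u' = "eigen_comb' w F"
  have k: "k t \<noteq> 0" for t using k_pos[of t] by simp
  have "((\<lambda>y. fd y * ?u' y + (V y + shift) * f y * ?u y) has_integral
      (\<Sum>t\<in>F. w t * ((t + shift) * fourier_coef f t))) {0..pi}"
    by (rule energy_eigen_comb_fourier_coef[OF F f T f_deriv])
  moreover have "(\<Sum>t\<in>F. w t * ((t + shift) * fourier_coef f t)) = A"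
    unfolding A_def w_def by (intro sum.cong) (auto simp: power2_eq_square)
  ultimately have mixed: "((\<lambda>y. fd y * ?u' y + (V y + shift) * f y * ?u y) has_integral A) {0..pi}"
    by simp
  have "(\<Sum>t\<in>F. (t + shift) * (w t)\<^sup>2 * k t) = A"
    unfolding A_def w_def using k by (intro sum.cong) (auto simp: power2_eq_square)
  then have comb: "((\<lambda>y. ?u' y * ?u' y + (V y + shift) * ?u y * ?u y) has_integral A) {0..pi}"
    using energy_eigen_comb[OF F, of w] by simp
  have "0 \<le> Q - 2 * A + A"
  proof (rule has_integral_nonneg)
    show "((\<lambda>y. (fd y * fd y + (V y + shift) * f y * f y)
        - 2 * (fd y * ?u' y + (V y + shift) * f y * ?u y)
        + (?u' y * ?u' y + (V y + shift) * ?u y * ?u y)) has_integral Q - 2 * A + A) {0..pi}"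
      by (intro has_integral_add has_integral_diff has_integral_mult_right energy mixed comb)
    fix y :: real assume "y \<in> {0..pi}"
    then have "0 \<le> (fd y - ?u' y)\<^sup>2 + (V y + shift) * (f y - ?u y)\<^sup>2"
      using one_le_V_shift[of y] by simp
    then show "0 \<le> (fd y * fd y + (V y + shift) * f y * f y)
        - 2 * (fd y * ?u' y + (V y + shift) * f y * ?u y)
        + (?u' y * ?u' y + (V y + shift) * ?u y * ?u y)"
      by (simp add: power2_eq_square algebra_simps)
  qed
  then show ?thesis unfolding A_def by simp
qed


lemma bessel_Rcut:
  assumes a: "0 < a" "a < pi" and F: "finite F" "F \<subseteq> spec_H xi'"
    and G_deriv: "\<And>y. y \<in> {0..pi} \<Longrightarrow> (G has_real_derivative G' y) (at y within {0..pi})"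
    and G': "continuous_on {0..pi} G'"
    and G_bounds: "\<And>y. y \<in> {0..pi} \<Longrightarrow> (G y)\<^sup>2 \<le> B \<and> (G' y)\<^sup>2 \<le> B"
  shows "(\<Sum>t\<in>F. (t + shift) * (fourier_coef (\<lambda>y. Rcut a y * G y) t)\<^sup>2 / k t)
           \<le> pi * (2 * B / (pi - a)\<^sup>2 + 2 * B + (M + shift) * B)"
proof -
  define f where "f y = Rcut a y * G y" for y
  define fd where "fd y = Rcut_deriv a y * G y + Rcut a y * G' y" for y
  define C where "C = 2 * B / (pi - a)\<^sup>2 + 2 * B + (M + shift) * B"
  have G: "continuous_on {0..pi} G" using G_deriv by (rule DERIV_continuous_on)
  have f: "continuous_on {0..pi} f"
    unfolding f_def[abs_def] by (intro continuous_intros continuous_on_Rcut a G)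
  have f_deriv: "(f has_real_derivative fd y) (at y)" if y: "y \<in> {0<..<pi} - {a}" for y
  proof -
    have "(G has_real_derivative G' y) (at y)" using G_deriv[of y] y by (simp add: at_within_Icc_at)
    with DERIV_mult'[OF Rcut_has_real_derivative[OF a(2)]] y
    show ?thesis unfolding f_def[abs_def] fd_def by (simp add: add.commute)
  qed
  have fd_sq: "(\<lambda>y. fd y * fd y) integrable_on {0..pi}"
    using integrable_on_Rcut_product_deriv_sq[OF a G G'] by (simp add: fd_def power2_eq_square)
  then have energy: "((\<lambda>y. fd y * fd y + (V y + shift) * f y * f y) has_integral
      integral {0..pi} (\<lambda>y. fd y * fd y + (V y + shift) * f y * f y)) {0..pi}"
    by (intro integrable_integral integrable_add[OF fd_sq] integrable_continuous_interval
        continuous_intros f continuous_V)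
  have "integral {0..pi} (\<lambda>y. fd y * fd y + (V y + shift) * f y * f y) \<le> pi * C"
  proof (rule has_integral_le[OF energy])
    show "((\<lambda>y. C) has_integral pi * C) {0..pi}" using has_integral_const_real[of C 0 pi] by simp
    fix y :: real assume y: "y \<in> {0..pi}"
    have "fd y * fd y \<le> 2 * B / (pi - a)\<^sup>2 + 2 * B"
      using Rcut_product_deriv_sq_le[OF a(2)] G_bounds[OF y] y by (simp add: fd_def power2_eq_square)
    moreover have "(V y + shift) * (f y * f y) \<le> (M + shift) * B"
      using Rcut_mult_sq_le[OF a(2)] G_bounds[OF y] one_le_V_shift[OF y] abs_V_le[OF y] y
      by (intro mult_mono) (auto simp: f_def power2_eq_square)
    ultimately show "fd y * fd y + (V y + shift) * f y * f y \<le> C"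
      unfolding C_def by (simp add: mult.assoc)
  qed
  moreover have "(\<Sum>t\<in>F. (t + shift) * (fourier_coef f t)\<^sup>2 / k t)
      \<le> integral {0..pi} (\<lambda>y. fd y * fd y + (V y + shift) * f y * f y)"
    by (rule bessel_energy[where T = "{a}", OF F f _ f_deriv energy]) simp
  ultimately show ?thesis unfolding C_def f_def[abs_def] by linarith
qed

lemma bessel_Rcut_xi:
  assumes a: "0 < a" "a < pi" and F: "finite F" "F \<subseteq> spec_H xi'"
    and B: "exp ((1 + M + cmod z) * pi) \<le> B"
  shows "(\<Sum>t\<in>F. (t + shift) * ((fourier_coef (\<lambda>y. Rcut a y * Re (xi y z)) t)\<^sup>2
           + (fourier_coef (\<lambda>y. Rcut a y * Im (xi y z)) t)\<^sup>2) / k t)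
         \<le> 2 * pi * (2 * B / (pi - a)\<^sup>2 + 2 * B + (M + shift) * B)"
proof -
  have deriv: "((\<lambda>y. Re (xi y z)) has_real_derivative Re (xi' y z)) (at y within {0..pi})"
    "((\<lambda>y. Im (xi y z)) has_real_derivative Im (xi' y z)) (at y within {0..pi})"
    if "y \<in> {0..pi}" for y
    using xi_deriv[OF that, of z] unfolding has_vector_derivative_complex_iff by auto
  have cont: "continuous_on {0..pi} (\<lambda>y. Re (xi' y z))" "continuous_on {0..pi} (\<lambda>y. Im (xi' y z))"
    by (intro continuous_intros continuous_on_xi')+
  have bounds: "(Re (xi y z))\<^sup>2 \<le> B \<and> (Re (xi' y z))\<^sup>2 \<le> B"
      "(Im (xi y z))\<^sup>2 \<le> B \<and> (Im (xi' y z))\<^sup>2 \<le> B" if "y \<in> {0..pi}" for y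
    using xi_energy_bound[OF that, of z] B unfolding cmod_power2 by (smt (verit) zero_le_power2)+
  show ?thesis
    using add_mono[OF bessel_Rcut[OF a F deriv(1) cont(1) bounds(1)] bessel_Rcut[OF a F deriv(2) cont(2) bounds(2)]]
    by (simp add: sum.distrib[symmetric] add_divide_distrib distrib_left) (simp add: algebra_simps)
qed

lemma spectral_term_sq:
  assumes a: "a < pi" and t: "t \<in> spec_H xi'"
  shows "((1 / kpi xi t) *
      cmod (integral {0..pi} (\<lambda>x. xi x z * complex_of_real (Rcut a x) * xi x (complex_of_real t))))\<^sup>2
    = ((t + shift) * ((fourier_coef (\<lambda>y. Rcut a y * Re (xi y z)) t)\<^sup>2
        + (fourier_coef (\<lambda>y. Rcut a y * Im (xi y z)) t)\<^sup>2) / k t) * (1 / (k t * (t + shift)))"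
proof -
  let ?h = "\<lambda>x. xi x z * complex_of_real (Rcut a x) * xi x (complex_of_real t)"
  have "?h integrable_on {0..pi}"
    by (intro integrable_continuous_interval continuous_intros continuous_on_xi continuous_on_Rcut a)
  moreover have "integral {0..pi} (\<lambda>x. Re (?h x)) = fourier_coef (\<lambda>y. Rcut a y * Re (xi y z)) t"
    "integral {0..pi} (\<lambda>x. Im (?h x)) = fourier_coef (\<lambda>y. Rcut a y * Im (xi y z)) t"
    unfolding fourier_coef_def by (auto intro!: integral_cong simp: xi_real)
  ultimately have "(cmod (integral {0..pi} ?h))\<^sup>2
      = (fourier_coef (\<lambda>y. Rcut a y * Re (xi y z)) t)\<^sup>2 + (fourier_coef (\<lambda>y. Rcut a y * Im (xi y z)) t)\<^sup>2"
    by (simp add: norm_integral_sq_Re_Im)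
  moreover have "k t \<noteq> 0" "t + shift \<noteq> 0" using k_pos[of t] one_le_eigenvalue_shift[OF t] by auto
  ultimately show ?thesis by (simp add: kpi_eq_k power_mult_distrib power2_eq_square)
qed


lemma spectral_series_uniform_limit:
  assumes a: "0 < a" "a < pi" and B: "\<And>z. z \<in> K \<Longrightarrow> exp ((1 + M + cmod z) * pi) \<le> B"
  shows "\<exists>g. uniform_limit K
       (\<lambda>F z. \<Sum>t\<in>F. (1 / kpi xi t) *
           cmod (integral {0..pi} (\<lambda>x. xi x z * complex_of_real (Rcut a x) * xi x (complex_of_real t))))
       g (finite_subsets_at_top (spec_H xi'))"
proof (rule exI, rule uniform_limit_sum_if_sq_le_mult)
  fix z t assume "z \<in> K" "t \<in> spec_H xi'"
  with k_pos[of t] one_le_eigenvalue_shift[of t]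
  show "0 \<le> (1 / kpi xi t) * cmod (integral {0..pi}
        (\<lambda>x. xi x z * complex_of_real (Rcut a x) * xi x (complex_of_real t)))
      \<and> 0 \<le> (t + shift) * ((fourier_coef (\<lambda>y. Rcut a y * Re (xi y z)) t)\<^sup>2
        + (fourier_coef (\<lambda>y. Rcut a y * Im (xi y z)) t)\<^sup>2) / k t
      \<and> 0 \<le> 1 / (k t * (t + shift))"
    by (simp add: kpi_eq_k)
qed (use spectral_term_sq[OF a(2)] bessel_Rcut_xi[OF a _ _ B] sum_inverse_k_shift_le_2 in auto)

end

theorem proposition3p5:
  fixes V :: "real \<Rightarrow> real" and a :: real
    and xi xi' :: "real \<Rightarrow> complex \<Rightarrow> complex"
  assumes V_ac: "abs_continuous_on 0 pi V"
    and a: "0 < a" "a < pi"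
    and xi_deriv: "\<And>z x. x \<in> {0..pi} \<Longrightarrow>
            ((\<lambda>y. xi y z) has_vector_derivative xi' x z) (at x within {0..pi})"
    and xi'_deriv: "\<And>z x. x \<in> {0..pi} \<Longrightarrow>
            ((\<lambda>y. xi' y z) has_vector_derivative ((complex_of_real (V x) - z) * xi x z))
              (at x within {0..pi})"
    and xi_init: "\<And>z. xi 0 z = 1" "\<And>z. xi' 0 z = 0"
  shows "\<forall>K. compact K \<longrightarrow>
    (\<exists>g. uniform_limit K
       (\<lambda>F z. \<Sum>t\<in>F. (1 / kpi xi t) *
           cmod (integral {0..pi} (\<lambda>x. xi x z * complex_of_real (Rcut a x) * xi x (complex_of_real t))))
       g (finite_subsets_at_top (spec_H xi')))"
proof (intro allI impI)
  fix K :: "complex set" assume "compact K"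
  have V: "continuous_on {0..pi} V" using V_ac by (rule abs_continuous_on_imp_continuous_on)
  obtain M where "\<And>x. x \<in> {0..pi} \<Longrightarrow> \<bar>V x\<bar> \<le> M"
    using compact_imp_bounded[OF compact_continuous_image[OF V compact_Icc]]
    unfolding bounded_iff by (auto simp del: atLeastAtMost_iff)
  then interpret neumann_solution V M xi xi'
    using V xi_deriv xi'_deriv xi_init by unfold_locales
  obtain r where "\<And>z. z \<in> K \<Longrightarrow> cmod z \<le> r"
    using compact_imp_bounded[OF \<open>compact K\<close>] unfolding bounded_iff by auto
  then have "exp ((1 + M + cmod z) * pi) \<le> exp ((1 + M + r) * pi)" if "z \<in> K" for z
    using that by simp
  then show "\<exists>g. uniform_limit K
       (\<lambda>F z. \<Sum>t\<in>F. (1 / kpi xi t) *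
           cmod (integral {0..pi} (\<lambda>x. xi x z * complex_of_real (Rcut a x) * xi x (complex_of_real t))))
       g (finite_subsets_at_top (spec_H xi'))"
    by (rule spectral_series_uniform_limit[OF a])
qed

end
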